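(* Let $\varphi(z)=\sum_{n=0}^{\infty}a_nz^n$ be an entire function whose zeros are all real and all of the same sign, and whose order $\rho_\varphi$ satisfies $0\le\rho_\varphi<1$. Then all zeros of both $$\varphi^o(z)=\sum_{n=0}^{\infty}a_{2n+1}z^{2n+1}\quad\text{and}\quad \varphi^e(z)=\sum_{n=0}^{\infty}a_{2n}z^{2n}$$ are purely imaginary (i.e. lie on the imaginary axis).
   Context: The order of an entire function $f$ is $\limsup_{r\to\infty}\frac{\log\log M(r)}{\log r}$, where $M(r)=\max_{|z|=r}|f(z)|$. *)

theory Defs
  imports "HOL-Analysis.Analysis"
begin

definition max_modulus :: "(complex \<Rightarrow> complex) \<Rightarrow> real \<Rightarrow> real" where
  "max_modulus f r = Sup ((\<lambda>z. norm (f z)) ` sphere 0 r)"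

definition entire_order :: "(complex \<Rightarrow> complex) \<Rightarrow> ereal" where
  "entire_order f = Limsup at_top (\<lambda>r::real. ereal (ln (ln (max_modulus f r)) / ln r))"

definition odd_part :: "(nat \<Rightarrow> complex) \<Rightarrow> complex \<Rightarrow> complex" where
  "odd_part a z = (\<Sum>n. a (2*n+1) * z ^ (2*n+1))"

definition even_part :: "(nat \<Rightarrow> complex) \<Rightarrow> complex \<Rightarrow> complex" where
  "even_part a z = (\<Sum>n. a (2*n) * z ^ (2*n))"

end

theory Submission
  imports Defs "HOL-Complex_Analysis.Complex_Analysis"
begin

text \<open>
  An entire function \<open>\<phi>\<close> of order less than 1 has genus zero, so it has a Hadamard product
  \<open>\<phi>(z) = c \<Prod> (1 - z/a\<^sub>n)\<close>. We obtain it from the Weierstrass product of the zeros: a Jensen-type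
  estimate on the number of zeros gives \<open>\<Sum> 1/|a\<^sub>n| < \<infinity>\<close>, the product is then bounded below on
  suitable circles, and the zero-free quotient, whose logarithm is controlled by the
  Borel-Caratheodory inequality, is constant.
  If all \<open>a\<^sub>n\<close> are negative, then \<open>|1 + u/a\<^sub>n| < |1 - u/a\<^sub>n|\<close> for \<open>Re u > 0\<close>, so \<open>|\<phi>(-u)| < |\<phi>(u)|\<close>
  off the imaginary axis. As \<open>\<phi>\<^sup>e(z) = (\<phi>(z) + \<phi>(-z))/2\<close> and \<open>\<phi>\<^sup>o(z) = (\<phi>(z) - \<phi>(-z))/2\<close>,
  a zero of either part forces \<open>|\<phi>(z)| = |\<phi>(-z)|\<close>, i.e. \<open>Re z = 0\<close>.
\<close>

section \<open>Even and odd parts\<close>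

lemma
  assumes series: "\<And>z. (\<lambda>n. a n * z ^ n) sums \<phi> z"
  shows even_part_eq: "even_part a z = (\<phi> z + \<phi> (-z)) / 2"
    and odd_part_eq: "odd_part a z = (\<phi> z - \<phi> (-z)) / 2"
proof -
  have sum: "(\<lambda>n. a n * z ^ n + a n * (-z) ^ n) sums (\<phi> z + \<phi> (-z))"
    using sums_add[OF series[of z] series[of "-z"]] .
  have diff: "(\<lambda>n. a n * z ^ n - a n * (-z) ^ n) sums (\<phi> z - \<phi> (-z))"
    using sums_diff[OF series[of z] series[of "-z"]] .
  have "(\<lambda>n. (\<lambda>n. a n * z ^ n + a n * (-z) ^ n) (2*n)) sums (\<phi> z + \<phi> (-z))"
  proof (subst sums_mono_reindex)
    show "strict_mono (\<lambda>n::nat. 2*n)" by (auto simp: strict_mono_def)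
    fix n :: nat assume "n \<notin> range (\<lambda>n. 2*n)"
    then have "odd n" by (metis evenE rangeI)
    then show "a n * z ^ n + a n * (-z) ^ n = 0" by (simp add: power_minus_odd)
  qed (rule sum)
  moreover have "\<And>n. (-z) ^ (2*n) = z ^ (2*n)" by (simp add: power_minus_even)
  ultimately have "(\<lambda>n. 2 * (a (2*n) * z ^ (2*n))) sums (\<phi> z + \<phi> (-z))"
    by (simp only: mult_2)
  then have "(\<lambda>n. a (2*n) * z ^ (2*n)) sums ((\<phi> z + \<phi> (-z)) / 2)"
    using sums_divide[of _ _ 2] by fastforce
  then show "even_part a z = (\<phi> z + \<phi> (-z)) / 2"
    unfolding even_part_def by (rule sums_unique[symmetric])
  have "(\<lambda>n. (\<lambda>n. a n * z ^ n - a n * (-z) ^ n) (2*n+1)) sums (\<phi> z - \<phi> (-z))"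
  proof (subst sums_mono_reindex)
    show "strict_mono (\<lambda>n::nat. 2*n+1)" by (auto simp: strict_mono_def)
    fix n :: nat assume "n \<notin> range (\<lambda>n. 2*n+1)"
    then have "even n" by (metis oddE rangeI)
    then show "a n * z ^ n - a n * (-z) ^ n = 0" by (simp add: power_minus_even)
  qed (rule diff)
  moreover have "\<And>n. (-z) ^ (2*n+1) = - (z ^ (2*n+1))" by (simp add: power_minus_odd)
  ultimately have "(\<lambda>n. 2 * (a (2*n+1) * z ^ (2*n+1))) sums (\<phi> z - \<phi> (-z))"
    by (simp only: mult_2 mult_minus_right diff_minus_eq_add)
  then have "(\<lambda>n. a (2*n+1) * z ^ (2*n+1)) sums ((\<phi> z - \<phi> (-z)) / 2)"
    using sums_divide[of _ _ 2] by fastforce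
  then show "odd_part a z = (\<phi> z - \<phi> (-z)) / 2"
    unfolding odd_part_def by (rule sums_unique[symmetric])
qed

lemma
  assumes series: "\<And>z. (\<lambda>n. a n * z ^ n) sums \<phi> z"
    and reflect: "\<And>z. Re z \<noteq> 0 \<Longrightarrow> norm (\<phi> z) \<noteq> norm (\<phi> (-z))"
  shows Re_eq_0_if_odd_part_eq_0: "odd_part a z = 0 \<Longrightarrow> Re z = 0"
    and Re_eq_0_if_even_part_eq_0: "even_part a z = 0 \<Longrightarrow> Re z = 0"
proof -
  show "Re z = 0" if "odd_part a z = 0"
  proof -
    have "\<phi> z = \<phi> (-z)" using that odd_part_eq[OF series, of z] by simp
    then show ?thesis using reflect by metis
  qed
  show "Re z = 0" if "even_part a z = 0"
  proof -
    have "\<phi> z = - \<phi> (-z)" using that even_part_eq[OF series, of z] by (simp add: add_eq_0_iff)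
    then have "norm (\<phi> z) = norm (\<phi> (-z))" by simp
    then show ?thesis using reflect by metis
  qed
qed

section \<open>Growth of functions of order less than one\<close>

lemma norm_le_max_modulus:
  assumes "continuous_on UNIV \<phi>"
  shows "norm (\<phi> z) \<le> max_modulus \<phi> (norm z)"
proof -
  have "compact ((\<lambda>z. norm (\<phi> z)) ` sphere 0 (norm z))"
    by (intro compact_continuous_image continuous_intros continuous_on_subset[OF assms]) auto
  then have "bdd_above ((\<lambda>z. norm (\<phi> z)) ` sphere 0 (norm z))"
    by (meson bounded_imp_bdd_above compact_imp_bounded)
  then show ?thesis unfolding max_modulus_def by (intro cSUP_upper) auto
qed

lemma entire_order_less_1_imp_growth:
  assumes entire: "\<phi> holomorphic_on UNIV" and ord: "entire_order \<phi> < 1"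
  obtains \<sigma> C where "0 < \<sigma>" "\<sigma> < 1" "\<And>z. norm (\<phi> z) \<le> exp (C + norm z powr \<sigma>)"
proof -
  have cont: "continuous_on UNIV \<phi>" using entire holomorphic_on_imp_continuous_on by blast
  obtain s where s: "entire_order \<phi> < ereal s" "ereal s < 1" using ereal_dense2[OF ord] by blast
  define \<sigma> where "\<sigma> = max s (1/2)"
  have \<sigma>: "0 < \<sigma>" "\<sigma> < 1" using s by (auto simp: \<sigma>_def)
  have "entire_order \<phi> < ereal \<sigma>" using s(1) by (auto simp: \<sigma>_def intro: less_le_trans)
  then have "eventually (\<lambda>r. ereal (ln (ln (max_modulus \<phi> r)) / ln r) < ereal \<sigma>) at_top"
    unfolding entire_order_def by (rule Limsup_lessD)
  then obtain R1 where R1: "\<And>r. r \<ge> R1 \<Longrightarrow> ln (ln (max_modulus \<phi> r)) / ln r < \<sigma>"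
    by (auto simp: eventually_at_top_linorder)
  define R2 where "R2 = max R1 3"
  have large: "norm (\<phi> z) \<le> exp (norm z powr \<sigma>)" if "norm z \<ge> R2" for z
  proof -
    define r where "r = norm z"
    have r: "r \<ge> R1" "r \<ge> 3" using that by (auto simp: r_def R2_def)
    have "max_modulus \<phi> r \<le> exp (r powr \<sigma>)"
    proof (cases "max_modulus \<phi> r \<le> 1")
      case True
      then show ?thesis by (smt (verit) one_le_exp_iff powr_ge_zero)
    next
      case False
      then have ln_pos: "ln (max_modulus \<phi> r) > 0" by simp
      have "ln (ln (max_modulus \<phi> r)) < \<sigma> * ln r"
        using R1[OF r(1)] r(2) by (simp add: divide_less_eq)
      then have "exp (ln (ln (max_modulus \<phi> r))) < exp (\<sigma> * ln r)" by simp
      then have "ln (max_modulus \<phi> r) < r powr \<sigma>"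
        using ln_pos r by (simp add: powr_def mult.commute)
      then show ?thesis using False
        by (metis exp_ln less_eq_real_def exp_less_cancel_iff not_le zero_less_one
            order_le_less_trans exp_gt_zero)
    qed
    then show ?thesis using norm_le_max_modulus[OF cont, of z] r_def by simp
  qed
  have "compact ((\<lambda>z. norm (\<phi> z)) ` cball 0 R2)"
    by (intro compact_continuous_image continuous_intros continuous_on_subset[OF cont]) auto
  then obtain B where B: "\<And>z. z \<in> cball 0 R2 \<Longrightarrow> norm (\<phi> z) \<le> B"
    using compact_imp_bounded by (force simp: bounded_iff)
  define C where "C = ln (max B 1)"
  have "norm (\<phi> z) \<le> exp (C + norm z powr \<sigma>)" for z
  proof (cases "norm z \<ge> R2")
    case True
    then show ?thesis using large[OF True] C_def
      by (smt (verit) exp_le_cancel_iff ln_ge_zero)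
  next
    case False
    then have "norm (\<phi> z) \<le> B" using B by auto
    also have "B \<le> exp C" unfolding C_def by simp
    also have "exp C \<le> exp (C + norm z powr \<sigma>)" by simp
    finally show ?thesis .
  qed
  then show ?thesis using \<sigma> that by blast
qed

lemma eventually_powr_le_linear:
  fixes A B s e :: real
  assumes s: "s < 1" and e: "e > 0"
  shows "eventually (\<lambda>T. A + B * T powr s \<le> e * T) at_top"
proof -
  have l0: "((\<lambda>T::real. T powr (-1)) \<longlongrightarrow> 0) at_top"
    by (rule tendsto_neg_powr) (auto intro: filterlim_ident)
  have l1: "((\<lambda>T::real. T powr (s-1)) \<longlongrightarrow> 0) at_top"
    by (rule tendsto_neg_powr) (use s in \<open>auto intro: filterlim_ident\<close>)
  have "((\<lambda>T. A * T powr (-1) + B * T powr (s - 1)) \<longlongrightarrow> A*0 + B*0) at_top"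
    by (intro tendsto_add tendsto_mult tendsto_const l0 l1)
  then have "eventually (\<lambda>T. A * T powr (-1) + B * T powr (s-1) < e) at_top"
    using e by (intro order_tendstoD) auto
  moreover have "eventually (\<lambda>T::real. T > 0) at_top" by (rule eventually_gt_at_top)
  ultimately show ?thesis
  proof eventually_elim
    case (elim T)
    have "A * T powr (-1) + B * T powr (s-1) = (A + B * T powr s) / T"
      using elim(2) by (simp add: powr_minus powr_diff field_simps)
    then show ?case using elim by (simp add: divide_less_eq)
  qed
qed

lemma eventually_powr_mult_ln_le_linear:
  fixes A B s e :: real
  assumes s: "0 < s" "s < 1" and e: "e > 0" and AB: "A \<ge> 0" "B \<ge> 0"
  shows "eventually (\<lambda>T. (A + B*T powr s) * ln (16*((A + B*T powr s) + 1)) \<le> e*T) at_top"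
proof -
  define d where "d = (1 - s)/2"
  have d: "d > 0" "s + d < 1" using s unfolding d_def by (auto simp: field_simps)
  define c where "c = A + B"
  define c' where "c' = ln (16*(c+1))"
  have c: "c \<ge> 0" "c' \<ge> 0" using AB by (auto simp: c_def c'_def)
  have ev1: "eventually (\<lambda>T. 0 + (c*c') * T powr s \<le> (e/2) * T) at_top"
    by (rule eventually_powr_le_linear) (use s e in auto)
  have ev2: "eventually (\<lambda>T. 0 + (c/d) * T powr (s+d) \<le> (e/2) * T) at_top"
    by (rule eventually_powr_le_linear) (use d e in auto)
  have ev3: "eventually (\<lambda>T::real. T \<ge> 1) at_top" by (rule eventually_ge_at_top)
  show ?thesis using ev1 ev2 ev3
  proof eventually_elim
    case (elim T)
    have T: "T > 0" using elim(3) by simp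
    define k where "k = A + B*T powr s"
    have Ts: "T powr s \<ge> 1" using elim(3) s by (intro ge_one_powr_ge_zero) auto
    have k0: "k \<ge> 0" using AB T by (simp add: k_def)
    have kle: "k \<le> c * T powr s"
      using AB Ts by (simp add: k_def c_def algebra_simps) (metis mult_left_mono mult.commute mult_1)
    have "ln (16*(k+1)) \<le> ln ((16*(c+1)) * T powr s)"
      using kle Ts k0 by (subst ln_le_cancel_iff) (auto simp: algebra_simps)
    also have "\<dots> = c' + s * ln T" using T c by (simp add: c'_def ln_mult_pos ln_powr)
    also have "\<dots> \<le> c' + ln T"
      using s elim(3) by (simp add: mult_left_le_one_le)
    also have "\<dots> \<le> c' + T powr d / d" using ln_powr_bound[OF elim(3) d(1)] by simp
    finally have L: "ln (16*(k+1)) \<le> c' + T powr d / d" .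
    have "k * ln (16*(k+1)) \<le> (c * T powr s) * (c' + T powr d / d)"
      by (intro mult_mono kle L) (use c k0 in auto)
    also have "\<dots> = (c*c') * T powr s + (c/d) * T powr (s+d)"
      by (simp add: powr_add algebra_simps)
    also have "\<dots> \<le> (e/2) * T + (e/2) * T" using elim(1,2) by (intro add_mono) simp_all
    also have "\<dots> = e * T" by simp
    finally show ?case by (simp add: k_def)
  qed
qed

section \<open>Zero-free entire functions of subexponential growth\<close>

definition subexponential_on_circles :: "(complex \<Rightarrow> complex) \<Rightarrow> bool" where
  "subexponential_on_circles h \<longleftrightarrow>
     (\<forall>e>0. \<forall>R0. \<exists>R\<ge>R0. \<forall>z. norm z = R \<longrightarrow> norm (h z) \<le> exp (e * R))"

lemma norm_less_norm_of_real_diff: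
  fixes w :: complex and A :: real
  assumes "Re w < 2*A" "A > 0"
  shows "norm w < norm (of_real (4*A) - w)"
proof -
  have "norm w ^ 2 < norm (of_real (4*A) - w) ^ 2"
    using assms unfolding cmod_power2 by (simp add: power2_eq_square algebra_simps)
  then show ?thesis by (meson norm_ge_zero power_less_imp_less_base)
qed

text \<open>Schwarz's lemma applied to \<open>g(u) = f(Ru) / (4A - f(Ru))\<close>, where \<open>f = L - L(0)\<close>.\<close>
lemma borel_caratheodory:
  fixes L :: "complex \<Rightarrow> complex"
  assumes hol: "L holomorphic_on cball 0 R" and R: "R > 0" and A: "A > 0"
    and bound: "\<And>w. norm w = R \<Longrightarrow> Re (L w - L 0) \<le> A" and z: "norm z < R"
  shows "norm (L z - L 0) \<le> 4*A*norm z / (R - norm z)"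
proof -
  define f where "f = (\<lambda>w. L w - L 0)"
  have fhol: "f holomorphic_on cball 0 R" unfolding f_def by (intro holomorphic_intros hol)
  have f_le: "Re (f w) \<le> A" if "w \<in> cball 0 R" for w
  proof (rule maximum_real_frontier[where S = "cball 0 R" and f = f])
    show "f holomorphic_on interior (cball 0 R)" using fhol by (rule holomorphic_on_subset) auto
    show "continuous_on (closure (cball 0 R)) f"
      using fhol holomorphic_on_imp_continuous_on by simp
    show "Re (f v) \<le> A" if "v \<in> frontier (cball 0 R)" for v
      using that R bound unfolding f_def by (simp add: frontier_cball)
  qed (use that in auto)
  have scaled: "of_real R * u \<in> cball 0 R" if "norm u < 1" for u :: complex
  proof -
    have "R * norm u \<le> R * 1" using that R by (intro mult_left_mono) auto
    then show ?thesis using R by (simp add: norm_mult)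
  qed
  define g where "g = (\<lambda>u. f (of_real R * u) / (of_real (4*A) - f (of_real R * u)))"
  have den: "of_real (4*A) - f (of_real R * u) \<noteq> 0" if "u \<in> ball 0 1" for u
  proof -
    have "Re (f (of_real R * u)) \<le> A" using that scaled f_le by simp
    then have "Re (of_real (4*A) - f (of_real R * u)) > 0" using A by simp
    then show ?thesis by (metis zero_complex.sel(1) less_irrefl)
  qed
  have g_less_1: "norm (g u) < 1" if "norm u < 1" for u
  proof -
    have "Re (f (of_real R * u)) < 2*A" using f_le[OF scaled[OF that]] A by linarith
    then have "norm (f (of_real R * u)) < norm (of_real (4*A) - f (of_real R * u))"
      using A by (rule norm_less_norm_of_real_diff)
    then show ?thesis unfolding g_def by (simp add: norm_divide divide_less_eq_1)
  qed
  have "(\<lambda>u. of_real R * u) holomorphic_on ball 0 1" by (intro holomorphic_intros)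
  then have "(f \<circ> (\<lambda>u. of_real R * u)) holomorphic_on ball 0 1"
    by (rule holomorphic_on_compose_gen[OF _ fhol]) (use scaled in auto)
  then have ghol: "g holomorphic_on ball 0 1"
    unfolding g_def o_def by (intro holomorphic_intros den) auto
  have g0: "g 0 = 0" by (simp add: g_def f_def)
  define u where "u = z / of_real R"
  have u: "norm u < 1" using z R by (simp add: u_def norm_divide)
  have gu: "norm (g u) \<le> norm u"
    using Schwarz_Lemma(1)[of g u] ghol g0 g_less_1 u by blast
  have Ru: "of_real R * u = z" using R by (simp add: u_def)
  have "of_real (4*A) - f z \<noteq> 0" using den[of u] u Ru by simp
  then have eq: "f z * (1 + g u) = of_real (4*A) * g u"
    unfolding g_def Ru by (simp add: field_simps)
  have "1 - norm u \<le> norm (1 + g u)"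
    using gu norm_triangle_ineq2[of 1 "- g u"] by (smt (verit) norm_minus_cancel norm_one diff_minus_eq_add)
  then have "norm (f z) * (1 - norm u) \<le> norm (f z) * norm (1 + g u)"
    by (simp add: mult_left_mono)
  also have "\<dots> = 4*A * norm (g u)"
    using eq A by (metis norm_mult norm_of_real abs_of_pos mult_pos_pos zero_less_numeral)
  also have "\<dots> \<le> 4*A * norm u" using gu A by simp
  finally have "norm (f z) \<le> 4*A*norm u / (1 - norm u)" using u by (simp add: le_divide_eq)
  also have "4*A*norm u / (1 - norm u) = 4*A*norm z / (R - norm z)"
    using R z by (simp add: u_def norm_divide field_simps)
  finally show ?thesis by (simp add: f_def)
qed

lemma entire_nonvanishing_subexponential_const:
  fixes h :: "complex \<Rightarrow> complex"
  assumes hol: "h holomorphic_on UNIV" and nz: "\<And>z. h z \<noteq> 0"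
    and growth: "subexponential_on_circles h"
  shows "h z = h 0"
proof -
  obtain L where Lhol: "L holomorphic_on UNIV" and L: "\<And>x. exp (L x) = h x"
    using holomorphic_logarithm_exists[of UNIV h 0] hol nz by auto
  have small: "norm (L z - L 0) \<le> 16 * e * norm z" if e: "e > 0" for e
  proof -
    obtain R where R: "R \<ge> 2 * norm z + 1 + norm (L 0) / e"
      and R_bound: "\<And>w. norm w = R \<Longrightarrow> norm (h w) \<le> exp (e*R)"
      using growth[unfolded subexponential_on_circles_def, rule_format, OF e] by blast
    have R_ge: "2 * norm z + 1 \<le> R" "norm (L 0) \<le> e * R" using R e
      by (smt (verit) divide_nonneg_pos norm_ge_zero,
          smt (verit) divide_le_eq mult.commute norm_ge_zero mult_left_mono)
    then have Rpos: "R > 0" and zR: "norm z < R" by (smt (verit) norm_ge_zero)+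
    define A where "A = 2 * e * R"
    have A: "A > 0" using e Rpos by (simp add: A_def)
    have bound: "Re (L w - L 0) \<le> A" if "norm w = R" for w
    proof -
      have "exp (Re (L w)) = norm (h w)" using L[of w] by (metis norm_exp_eq_Re)
      also have "\<dots> \<le> exp (e*R)" using R_bound[OF that] .
      finally have "Re (L w) \<le> e * R" by simp
      moreover have "- Re (L 0) \<le> norm (L 0)" using abs_Re_le_cmod[of "L 0"] by linarith
      ultimately show ?thesis using R_ge by (simp add: A_def)
    qed
    have "norm (L z - L 0) \<le> 4*A*norm z / (R - norm z)"
      by (rule borel_caratheodory[OF holomorphic_on_subset[OF Lhol] Rpos A bound zR]) auto
    also have "\<dots> \<le> 4*A*norm z / (R/2)"
      using R_ge A zR Rpos by (intro divide_left_mono mult_nonneg_nonneg mult_pos_pos) auto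
    also have "\<dots> = 16 * e * norm z" using Rpos by (simp add: A_def field_simps)
    finally show ?thesis .
  qed
  have "norm (L z - L 0) \<le> 0"
  proof (rule field_le_epsilon)
    fix e :: real assume e: "e > 0"
    have pos: "norm z + 1 > 0" by (smt (verit) norm_ge_zero)
    have "norm (L z - L 0) \<le> 16 * (e / (16 * (norm z + 1))) * norm z"
      using small[of "e / (16 * (norm z + 1))"] e pos by simp
    also have "\<dots> = e * (norm z / (norm z + 1))" using pos by (simp add: field_simps)
    also have "\<dots> \<le> e * 1" using e pos by (intro mult_left_mono) (auto simp: divide_le_eq)
    finally show "norm (L z - L 0) \<le> 0 + e" by simp
  qed
  then have "L z = L 0" by simp
  then show ?thesis using L by metis
qed

section \<open>Zeros of entire functions\<close>

lemma entire_factor_same_zeros: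
  fixes \<phi> F :: "complex \<Rightarrow> complex"
  assumes h\<phi>: "\<phi> holomorphic_on UNIV" and hF: "F holomorphic_on UNIV"
    and zero_iff: "\<And>z. F z = 0 \<longleftrightarrow> \<phi> z = 0"
    and zorder_eq: "\<And>z. \<phi> z = 0 \<Longrightarrow> zorder F z = zorder \<phi> z"
  obtains h where "h holomorphic_on UNIV" "\<And>z. h z \<noteq> 0" "\<And>z. \<phi> z = h z * F z"
proof -
  have analytic: "f analytic_on {z}" if "f holomorphic_on UNIV" for f :: "complex \<Rightarrow> complex" and z
    using that by (meson analytic_on_open open_UNIV analytic_on_subset subset_UNIV)
  have "zorder F z = zorder \<phi> z" for z
  proof (cases "\<phi> z = 0")
    case False
    then have "F z \<noteq> 0" using zero_iff by blast
    then show ?thesis using False zorder_eq_0I analytic hF h\<phi> by metis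
  qed (use zorder_eq in blast)
  then show ?thesis
    using holomorphic_zorder_factorization[of \<phi> UNIV F] h\<phi> hF zero_iff that by auto
qed

lemma zorder_entire_pos:
  fixes \<phi> :: "complex \<Rightarrow> complex"
  assumes hol: "\<phi> holomorphic_on UNIV" and nz: "\<phi> 0 \<noteq> 0" and z: "\<phi> z = 0"
  shows "zorder \<phi> z > 0"
proof -
  have "eventually (\<lambda>w. \<phi> w \<noteq> 0 \<and> w \<in> UNIV) (at z)"
    by (rule non_zero_neighbour_alt[OF hol]) (use nz in auto)
  then have "frequently (\<lambda>w. \<phi> w \<noteq> 0) (at z)"
    by (intro eventually_frequently) (auto elim: eventually_mono)
  then show ?thesis using zorder_pos_iff[OF hol] z by auto
qed

lemma entire_zeros_sequence:
  fixes \<phi> :: "complex \<Rightarrow> complex"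
  assumes hol: "\<phi> holomorphic_on UNIV" and nz: "\<phi> 0 \<noteq> 0" and inf: "infinite {z. \<phi> z = 0}"
  obtains a :: "nat \<Rightarrow> complex" where "mono (norm \<circ> a)" "range a = {z. \<phi> z = 0}"
    "filterlim a at_infinity at_top"
    "\<And>z. \<phi> z = 0 \<Longrightarrow> finite (a -` {z}) \<and> int (card (a -` {z})) = zorder \<phi> z"
proof -
  define Z where "Z = {z. \<phi> z = 0}"
  have cont: "continuous_on UNIV \<phi>" using hol holomorphic_on_imp_continuous_on by blast
  have closed: "closed Z" unfolding Z_def by (rule closed_Collect_eq[OF cont]) auto
  have "\<not> \<phi> constant_on UNIV"
    using inf nz unfolding constant_on_def by (metis (mono_tags, lifting) Collect_empty_eq UNIV_I finite.emptyI)
  then have fin: "finite (Z \<inter> cball 0 r)" for r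
  proof -
    have "finite {z \<in> cball 0 r. \<phi> z = 0}"
      by (rule holomorphic_compact_finite_zeros[OF hol]) (use \<open>\<not> \<phi> constant_on UNIV\<close> in auto)
    moreover have "Z \<inter> cball 0 r = {z \<in> cball 0 r. \<phi> z = 0}" by (auto simp: Z_def)
    ultimately show ?thesis by simp
  qed
  have pos: "zorder \<phi> z > 0" if "z \<in> Z" for z
    using zorder_entire_pos[OF hol nz] that by (simp add: Z_def)
  obtain a :: "nat \<Rightarrow> complex" where a: "mono (norm \<circ> a)" "range a = Z" "filterlim a at_infinity at_top"
    "\<And>z. z \<in> Z \<Longrightarrow> finite (a -` {z}) \<and> card (a -` {z}) = nat (zorder \<phi> z)"
    using sequence_of_sparse_set_exists'[of Z "\<lambda>z. nat (zorder \<phi> z)"] inf closed fin pos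
    unfolding Z_def by (auto simp: Z_def)
  show ?thesis
  proof (rule that[OF a(1) _ a(3)])
    show "range a = {z. \<phi> z = 0}" using a(2) Z_def by simp
    fix z assume "\<phi> z = 0"
    then have "z \<in> Z" by (simp add: Z_def)
    then show "finite (a -` {z}) \<and> int (card (a -` {z})) = zorder \<phi> z"
      using a(4) pos by force
  qed
qed

lemma entire_divide_initial_zeros:
  fixes \<phi> :: "complex \<Rightarrow> complex" and a :: "nat \<Rightarrow> complex"
  assumes hol: "\<phi> holomorphic_on UNIV" and nz: "\<phi> 0 \<noteq> 0"
    and zeros: "range a = {z. \<phi> z = 0}" and lim: "filterlim a at_infinity at_top"
    and mult: "\<And>z. \<phi> z = 0 \<Longrightarrow> finite (a -` {z}) \<and> int (card (a -` {z})) = zorder \<phi> z"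
  obtains G where "G holomorphic_on UNIV" "G 0 = \<phi> 0"
    "\<And>z. (\<And>i. i < N \<Longrightarrow> z \<noteq> a i) \<Longrightarrow> \<phi> z = G z * (\<Prod>i<N. 1 - z / a i)"
proof -
  have a_nz: "a n \<noteq> 0" for n
    using nz rangeI[of a n] unfolding zeros by auto
  interpret W: weierstrass_product' a
  proof
    show "\<And>z. z \<in> range a \<Longrightarrow> finite (a -` {z})" using mult zeros by auto
  qed (use a_nz lim in auto)
  have W_zero: "W.f z = 0 \<longleftrightarrow> \<phi> z = 0" for z
    using W.zero[of z] unfolding zeros by simp
  have W_zorder: "zorder W.f z = zorder \<phi> z" if "\<phi> z = 0" for z
    using W.zorder[of z] mult[OF that] by simp
  obtain H where Hhol: "H holomorphic_on UNIV" and HW: "\<And>z. \<phi> z = H z * W.f z"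
    using entire_factor_same_zeros[OF hol W.holomorphic[of UNIV] W_zero W_zorder] by blast
  interpret V: weierstrass_product "\<lambda>n. a (n+N)" "\<lambda>n. n+N"
  proof
    show "filterlim (\<lambda>n. a (n + N)) at_infinity at_top"
      by (rule filterlim_compose[OF lim filterlim_add_const_nat_at_top])
    fix r :: real assume "r > 0"
    from summable_ignore_initial_segment[OF W.summable_a_p[OF this], of N]
    show "summable (\<lambda>n. (r / norm (a (n + N))) ^ Suc (n + N))" .
  qed (use a_nz in auto)
  \<comment> \<open>the exponential parts of the first \<open>N\<close> Weierstrass factors\<close>
  define E where "E = (\<lambda>z. \<Prod>i<N. exp (\<Sum>k=1..i. (z / a i) ^ k / of_nat k))"
  define G where "G = (\<lambda>z. H z * V.f z * E z)"
  have Ghol: "G holomorphic_on UNIV"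
    unfolding G_def E_def by (intro holomorphic_intros Hhol V.holomorphic) (auto simp: a_nz)
  have W_split: "W.f z = V.f z * (\<Prod>i<N. weierstrass_factor i (z / a i))"
    if zn: "\<And>i. i < N \<Longrightarrow> z \<noteq> a i" for z
  proof -
    have "weierstrass_factor i (z / a i) \<noteq> 0" if "i < N" for i
      using zn[OF that] a_nz[of i] by (auto simp: field_simps)
    then have "(\<lambda>i. weierstrass_factor i (z / a i)) has_prod (V.f z * (\<Prod>i<N. weierstrass_factor i (z / a i)))"
      using has_prod_iff_shift[of N "\<lambda>i. weierstrass_factor i (z / a i)" "V.f z"] V.has_prod[of z]
      by simp
    then show ?thesis using W.has_prod[of z] has_prod_unique2 by blast
  qed
  have "(\<Prod>i<N. weierstrass_factor i (z / a i)) = (\<Prod>i<N. 1 - z / a i) * E z" for z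
    unfolding E_def weierstrass_factor_def by (simp add: prod.distrib)
  then have fac: "\<phi> z = G z * (\<Prod>i<N. 1 - z / a i)" if "\<And>i. i < N \<Longrightarrow> z \<noteq> a i" for z
    using W_split[OF that] HW[of z] by (simp add: G_def mult_ac)
  have "G 0 = \<phi> 0"
  proof -
    have "(\<lambda>n. 1) has_prod V.f 0" "(\<lambda>n. 1) has_prod W.f 0"
      using V.has_prod[of 0] W.has_prod[of 0] by simp_all
    then have "V.f 0 = 1" "W.f 0 = 1" using has_prod_one has_prod_unique2 by metis+
    moreover have "E 0 = 1" unfolding E_def
      by (intro prod.neutral ballI) (auto simp: power_0_left intro!: sum.neutral)
    ultimately show ?thesis using HW[of 0] by (simp add: G_def)
  qed
  then show ?thesis using that Ghol fac by blast
qed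

text \<open>A Jensen-type estimate: on the circle of radius \<open>3|a\<^sub>N\<^sub>-\<^sub>1|\<close> each linear factor of the first
  \<open>N\<close> zeros has modulus at least 2; divide them out and use the maximum modulus principle.\<close>
lemma two_power_mult_norm_le_circle_bound:
  fixes \<phi> :: "complex \<Rightarrow> complex" and a :: "nat \<Rightarrow> complex"
  assumes hol: "\<phi> holomorphic_on UNIV" and nz: "\<phi> 0 \<noteq> 0"
    and mono: "mono (norm \<circ> a)" and zeros: "range a = {z. \<phi> z = 0}"
    and lim: "filterlim a at_infinity at_top"
    and mult: "\<And>z. \<phi> z = 0 \<Longrightarrow> finite (a -` {z}) \<and> int (card (a -` {z})) = zorder \<phi> z"
    and N: "N > 0" and bound: "\<And>z. norm z = 3 * norm (a (N-1)) \<Longrightarrow> norm (\<phi> z) \<le> B"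
  shows "2^N * norm (\<phi> 0) \<le> B"
proof -
  obtain G where Ghol: "G holomorphic_on UNIV" and G0: "G 0 = \<phi> 0"
    and fac: "\<And>z. (\<And>i. i < N \<Longrightarrow> z \<noteq> a i) \<Longrightarrow> \<phi> z = G z * (\<Prod>i<N. 1 - z / a i)"
    using entire_divide_initial_zeros[OF hol nz zeros lim mult] by blast
  have a_nz: "a n \<noteq> 0" for n
    using nz rangeI[of a n] unfolding zeros by auto
  define \<rho> where "\<rho> = 3 * norm (a (N-1))"
  have aN: "norm (a (N-1)) > 0" using a_nz by simp
  have a_le: "norm (a i) \<le> norm (a (N-1))" if "i < N" for i
    using mono that unfolding mono_def o_def by (metis Suc_pred' N less_Suc_eq_le)
  have G_bound: "norm (G z) \<le> B / 2^N" if "z \<in> frontier (cball 0 \<rho>)" for z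
  proof -
    have z: "norm z = \<rho>" using that aN by (simp add: \<rho>_def)
    have factor_ge: "norm (1 - z / a i) \<ge> 2" if "i < N" for i
    proof -
      have "3 \<le> \<rho> / norm (a i)" using a_le[OF that] a_nz[of i] aN unfolding \<rho>_def
        by (simp add: le_divide_eq)
      also have "\<dots> = norm (1 - (1 - z / a i))" using z by (simp add: norm_divide)
      also have "\<dots> \<le> 1 + norm (1 - z / a i)" using norm_triangle_ineq4[of 1 "1 - z / a i"] by simp
      finally show ?thesis by simp
    qed
    have "(2::real)^N = (\<Prod>i<N. 2)" by simp
    also have "\<dots> \<le> norm (\<Prod>i<N. 1 - z / a i)"
      unfolding prod_norm[symmetric] by (intro prod_mono) (use factor_ge in auto)
    finally have Q_ge: "2^N \<le> norm (\<Prod>i<N. 1 - z / a i)" .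
    have "z \<noteq> a i" if "i < N" for i
      using a_le[OF that] z aN unfolding \<rho>_def by auto
    then have "norm (G z) * 2^N \<le> norm (\<phi> z)"
      using fac[of z] Q_ge by (simp add: norm_mult mult_left_mono)
    also have "\<dots> \<le> B" using bound z \<rho>_def by simp
    finally show ?thesis by (simp add: le_divide_eq)
  qed
  have "norm (G 0) \<le> B / 2^N"
  proof (rule maximum_modulus_frontier[where S = "cball 0 \<rho>" and f = G])
    show "G holomorphic_on interior (cball 0 \<rho>)" using Ghol by (rule holomorphic_on_subset) auto
    show "continuous_on (closure (cball 0 \<rho>)) G"
      using Ghol holomorphic_on_imp_continuous_on continuous_on_subset by blast
  qed (use G_bound aN \<rho>_def in auto)
  then show ?thesis using G0 by (simp add: le_divide_eq mult.commute)
qed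

lemma entire_zero_counting_bound:
  fixes \<phi> :: "complex \<Rightarrow> complex" and a :: "nat \<Rightarrow> complex"
  assumes hol: "\<phi> holomorphic_on UNIV" and nz: "\<phi> 0 \<noteq> 0"
    and mono: "mono (norm \<circ> a)" and zeros: "range a = {z. \<phi> z = 0}"
    and lim: "filterlim a at_infinity at_top"
    and mult: "\<And>z. \<phi> z = 0 \<Longrightarrow> finite (a -` {z}) \<and> int (card (a -` {z})) = zorder \<phi> z"
    and growth: "\<And>z. norm (\<phi> z) \<le> exp (C + norm z powr \<sigma>)"
  shows "real (Suc n) * ln 2 \<le> (C - ln (norm (\<phi> 0))) + (3 * norm (a n)) powr \<sigma>"
proof -
  have "2^(Suc n) * norm (\<phi> 0) \<le> exp (C + (3 * norm (a n)) powr \<sigma>)"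
  proof (rule two_power_mult_norm_le_circle_bound[OF hol nz mono zeros lim mult])
    show "norm (\<phi> z) \<le> exp (C + (3 * norm (a n)) powr \<sigma>)" if "norm z = 3 * norm (a (Suc n - 1))" for z
      using growth[of z] that by simp
  qed auto
  then have "ln (2^(Suc n) * norm (\<phi> 0)) \<le> ln (exp (C + (3 * norm (a n)) powr \<sigma>))"
    using nz by (subst ln_le_cancel_iff) auto
  moreover have "ln (2^(Suc n) * norm (\<phi> 0)) = real (Suc n) * ln 2 + ln (norm (\<phi> 0))"
    using nz by (simp add: ln_mult_pos ln_realpow algebra_simps)
  ultimately show ?thesis by simp
qed

section \<open>Convergence exponent and minimum modulus\<close>

lemma summable_inverse_if_counting_bound:
  fixes r :: "nat \<Rightarrow> real" and \<sigma> D :: real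
  assumes rpos: "\<And>n. r n > 0" and \<sigma>: "0 < \<sigma>" "\<sigma> < 1"
    and count: "\<And>n. real (Suc n) * ln 2 \<le> D + (3 * r n) powr \<sigma>"
  shows "summable (\<lambda>n. 1 / r n)"
proof -
  define \<tau> where "\<tau> = 1 / \<sigma>"
  have \<tau>: "\<tau> > 1" "\<sigma> * \<tau> = 1" using \<sigma> by (auto simp: \<tau>_def)
  define c where "c = 3 * (ln 2 / 2) powr (-\<tau>)"
  have "summable (\<lambda>n. real n powr (-\<tau>))" using \<tau> by (subst summable_real_powr_iff) auto
  then have majorant: "summable (\<lambda>n. c * real (n+1) powr (-\<tau>))"
    by (intro summable_mult summable_ignore_initial_segment)
  obtain m :: nat where "real m \<ge> 2 * D / ln 2" using real_arch_simple by blast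
  then have "eventually (\<lambda>n. real (Suc n) \<ge> 2 * D / ln 2) sequentially"
    unfolding eventually_sequentially by (intro exI[of _ m]) (auto intro: order_trans)
  then have "eventually (\<lambda>n. norm (1 / r n) \<le> c * real (n+1) powr (-\<tau>)) sequentially"
  proof eventually_elim
    case (elim n)
    define y where "y = real (Suc n) * ln 2 / 2"
    have ypos: "y > 0" by (simp add: y_def)
    have "D \<le> real (Suc n) * ln 2 / 2"
      using elim by (simp add: divide_le_eq mult.commute)
    then have "y \<le> (3 * r n) powr \<sigma>" using count[of n] by (simp add: y_def)
    then have "y powr \<tau> \<le> ((3 * r n) powr \<sigma>) powr \<tau>"
      using ypos \<tau> by (intro powr_mono2) auto
    also have "\<dots> = 3 * r n" using rpos[of n] \<tau> by (simp add: powr_powr)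
    finally have "1 / r n \<le> 3 / y powr \<tau>"
      using ypos rpos[of n] by (simp add: divide_simps)
    also have "y powr \<tau> = real (Suc n) powr \<tau> * (ln 2 / 2) powr \<tau>"
      unfolding y_def by (subst powr_mult[symmetric]) (auto simp: mult.assoc)
    also have "3 / (real (Suc n) powr \<tau> * (ln 2 / 2) powr \<tau>) = c * real (n+1) powr (-\<tau>)"
      by (simp add: c_def powr_minus field_simps)
    finally show ?case using rpos[of n] by simp
  qed
  then show ?thesis by (rule summable_comparison_test_ev[OF _ majorant])
qed

lemma exists_radius_apart_from:
  fixes r :: "nat \<Rightarrow> real" and K :: nat and T :: real
  assumes T: "T > 0"
  obtains R where "T \<le> R" "R \<le> 2*T" "\<And>n. n < K \<Longrightarrow> \<bar>R - r n\<bar> \<ge> T / (4*K+4)"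
proof -
  \<comment> \<open>pigeonhole: \<open>2K+2\<close> equally spaced points of \<open>[T, 2T]\<close>, two of them near the same \<open>r n\<close>\<close>
  define \<delta> where "\<delta> = T / (4*K+4)"
  define c where "c = (\<lambda>j::nat. T + j * (2*\<delta>))"
  have c_in: "T \<le> c j \<and> c j \<le> 2*T" if "j \<le> 2*K+1" for j
  proof -
    have "real j * (2*\<delta>) \<le> (2*K+2) * (2*\<delta>)"
      using that T by (intro mult_right_mono) (auto simp: \<delta>_def)
    also have "\<dots> = T" by (simp add: \<delta>_def field_simps)
    finally show ?thesis using T by (simp add: c_def \<delta>_def)
  qed
  have "\<exists>j\<le>2*K+1. \<forall>n<K. \<bar>c j - r n\<bar> \<ge> \<delta>"
  proof (rule ccontr)
    assume "\<not> ?thesis"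
    then have "\<exists>n<K. \<bar>c j - r n\<bar> < \<delta>" if "j \<le> 2*K+1" for j
      using that by (meson not_le)
    then obtain g where g: "\<And>j. j \<le> 2*K+1 \<Longrightarrow> g j < K \<and> \<bar>c j - r (g j)\<bar> < \<delta>"
      by metis
    have "inj_on g {..2*K+1}"
    proof (rule inj_onI)
      fix i j assume "i \<in> {..2*K+1}" "j \<in> {..2*K+1}" "g i = g j"
      then have "\<bar>c i - c j\<bar> < 2*\<delta>" using g[of i] g[of j] by auto
      moreover have "\<delta> > 0" using T by (simp add: \<delta>_def)
      moreover have "c i - c j = (real i - real j) * (2*\<delta>)" by (simp add: c_def algebra_simps)
      then have "\<bar>c i - c j\<bar> = \<bar>real i - real j\<bar> * (2*\<delta>)" using \<open>\<delta> > 0\<close> by (simp add: abs_mult)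
      ultimately have "\<bar>real i - real j\<bar> < 1" by simp
      then show "i = j" by linarith
    qed
    moreover have "g ` {..2*K+1} \<subseteq> {..<K}" using g by auto
    ultimately have "card {..2*K+1} \<le> card {..<K}" using card_inj_on_le by blast
    then show False by simp
  qed
  then show ?thesis using that c_in unfolding \<delta>_def by blast
qed

lemma ln_has_prod_lower_bound:
  fixes r :: "nat \<Rightarrow> real" and K :: nat
  assumes rpos: "\<And>n. r n > 0" and summ: "summable (\<lambda>n. 1 / r n)"
    and T: "T > 0" and R: "T \<le> R" "R \<le> 2*T"
    and large: "\<And>n. n \<ge> K \<Longrightarrow> r n \<ge> 4*T"
    and small: "\<And>n. n < K \<Longrightarrow> r n < 4*T"
    and apart: "\<And>n. n < K \<Longrightarrow> \<bar>R - r n\<bar> \<ge> T / (4*K+4)"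
    and prod: "(\<lambda>n. \<bar>1 - R / r n\<bar>) has_prod p"
  shows "p > 0" "- (real K * ln (16 * (real K + 1))) - 2*R*(\<Sum>n. 1 / r (n+K)) \<le> ln p"
proof -
  define f where "f = (\<lambda>n. \<bar>1 - R / r n\<bar>)"
  define g where "g = (\<lambda>n. if n < K then - ln (16 * (real K + 1)) else - 2*R / r n)"
  have f_small: "f n \<ge> 1 / (16 * (real K + 1))" if "n < K" for n
  proof -
    have "f n = \<bar>R - r n\<bar> / r n" using rpos[of n]
      by (simp add: f_def field_simps abs_div_pos[symmetric] abs_minus_commute)
    also have "\<dots> \<ge> (T / (4*K+4)) / (4*T)"
      using apart[OF that] small[OF that] rpos[of n] T by (intro frac_le) auto
    also have "(T / (4*K+4)) / (4*T) = (T / (4*T)) / (4*K+4)" by simp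
    also have "\<dots> = 1 / (16 * (real K + 1))" using T by simp
    finally show ?thesis .
  qed
  have f_large: "f n = 1 - R / r n" "0 \<le> R / r n" "R / r n \<le> 1/2" if "n \<ge> K" for n
  proof -
    show "R / r n \<le> 1/2" using large[OF that] rpos[of n] R T by (simp add: divide_le_eq)
    show "0 \<le> R / r n" using rpos[of n] R T by simp
    then show "f n = 1 - R / r n" using \<open>R / r n \<le> 1/2\<close> by (simp add: f_def)
  qed
  have fpos: "f n > 0" for n
  proof (cases "n < K")
    case True
    have "(0::real) < 1 / (16 * (real K + 1))" by simp
    then show ?thesis using f_small[OF True] by linarith
  next
    case False
    then have "f n = 1 - R / r n" "R / r n \<le> 1/2" using f_large[of n] by auto
    then show ?thesis by linarith
  qed
  show "p > 0" using has_prod_pos[of f p] prod fpos unfolding f_def by blast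
  have ln_sum: "(\<lambda>n. ln (f n)) sums (ln p)"
    using has_prod_imp_sums_ln_real'[of f p] prod fpos unfolding f_def by blast
  have g_le: "g n \<le> ln (f n)" for n
  proof (cases "n < K")
    case True
    have "ln (1 / (16 * (real K + 1))) \<le> ln (f n)"
      using f_small[OF True] fpos[of n] by (subst ln_le_cancel_iff) auto
    then show ?thesis using True by (simp add: g_def ln_div)
  next
    case False
    define x where "x = R / r n"
    have x: "0 \<le> x" "x \<le> 1/2" using f_large False by (auto simp: x_def)
    have "2 * x\<^sup>2 \<le> x" using mult_right_mono[of "2*x" 1 x] x by (simp add: power2_eq_square)
    then have "- 2 * x \<le> ln (1 - x)" using ln_one_minus_pos_lower_bound[OF x] by linarith
    then show ?thesis using False f_large[of n] by (simp add: g_def x_def)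
  qed
  have "(\<lambda>n. (- 2*R) * (1 / r (n+K))) sums ((- 2*R) * (\<Sum>n. 1 / r (n+K)))"
    by (intro sums_mult summable_sums summable_ignore_initial_segment[OF summ])
  then have "(\<lambda>n. g (n + K)) sums (- 2*R*(\<Sum>n. 1 / r (n+K)))"
    by (simp add: g_def)
  moreover have "(\<Sum>i<K. g i) = - (real K * ln (16 * (real K + 1)))" by (simp add: g_def)
  ultimately have "g sums (- 2*R*(\<Sum>n. 1 / r (n+K)) - (real K * ln (16 * (real K + 1))))"
    using sums_iff_shift[of g K] by simp
  from sums_le[OF _ this ln_sum] g_le
  show "- (real K * ln (16 * (real K + 1))) - 2*R*(\<Sum>n. 1 / r (n+K)) \<le> ln p" by simp
qed

lemma exists_radius_product_lower_bound:
  fixes r :: "nat \<Rightarrow> real" and q :: "real \<Rightarrow> real"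
  assumes rpos: "\<And>n. r n > 0" and mono: "mono r" and lim: "filterlim r at_top at_top"
    and summ: "summable (\<lambda>n. 1 / r n)" and q: "\<And>R. (\<lambda>n. \<bar>1 - R / r n\<bar>) has_prod q R"
    and T: "T > 0"
  obtains R K where "T \<le> R" "R \<le> 2*T" "\<And>n. n < K \<Longrightarrow> r n < 4*T" "\<And>n. K \<le> n \<Longrightarrow> 4*T \<le> r n"
    "q R > 0" "- (real K * ln (16 * (real K + 1))) - 2*R*(\<Sum>n. 1 / r (n+K)) \<le> ln (q R)"
proof -
  have "\<exists>n. r n \<ge> 4*T"
    using lim unfolding filterlim_at_top eventually_sequentially by blast
  define K where "K = (LEAST n. r n \<ge> 4*T)"
  have K_large: "r n \<ge> 4*T" if "n \<ge> K" for n
  proof -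
    have "r K \<ge> 4*T" unfolding K_def by (rule LeastI_ex) fact
    moreover have "r K \<le> r n" using mono that by (simp add: mono_def)
    ultimately show ?thesis by simp
  qed
  have K_small: "r n < 4*T" if "n < K" for n
    using not_less_Least[OF that[unfolded K_def]] by simp
  obtain R where R: "T \<le> R" "R \<le> 2*T" and apart: "\<And>n. n < K \<Longrightarrow> \<bar>R - r n\<bar> \<ge> T / (4*K+4)"
    using exists_radius_apart_from[where r = r and K = K, OF T] by blast
  show ?thesis
    using that[OF R K_small K_large] ln_has_prod_lower_bound[OF rpos summ T R K_large K_small apart q]
    by blast
qed

lemma radial_product_exists:
  fixes a :: "nat \<Rightarrow> complex"
  assumes a_nz: "\<And>n. a n \<noteq> 0" and lim: "filterlim (\<lambda>n. norm (a n)) at_top at_top"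
    and summ: "summable (\<lambda>n. 1 / norm (a n))"
  obtains q where "\<And>R. (\<lambda>n. \<bar>1 - R / norm (a n)\<bar>) has_prod q R"
proof -
  interpret Q: weierstrass_product "\<lambda>n. complex_of_real (norm (a n))" "\<lambda>_. 0"
  proof
    show "filterlim (\<lambda>n. complex_of_real (norm (a n))) at_infinity at_top"
      using lim by (simp add: filterlim_at_infinity_conv_norm_at_top)
    fix s :: real
    show "summable (\<lambda>n. (s / norm (complex_of_real (norm (a n)))) ^ Suc 0)"
      using summable_mult[OF summ, of s] by simp
  qed (use a_nz in auto)
  have "(\<lambda>n. \<bar>1 - R / norm (a n)\<bar>) has_prod norm (Q.f (of_real R))" for R :: real
  proof -
    have "weierstrass_factor 0 (of_real R / of_real (norm (a n))) = of_real (1 - R / norm (a n))" for n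
      by (simp add: weierstrass_factor_def)
    then show ?thesis using has_prod_norm[OF Q.has_prod[of "of_real R"]] by (simp only: norm_of_real)
  qed
  then show ?thesis by (rule that)
qed

lemma norm_has_prod_ge_radial:
  fixes a :: "nat \<Rightarrow> complex"
  assumes z: "norm z = R" and p: "(\<lambda>n. 1 - z / a n) has_prod p"
    and q: "(\<lambda>n. \<bar>1 - R / norm (a n)\<bar>) has_prod q"
  shows "q \<le> norm p"
proof (rule has_prod_le[OF q has_prod_norm[OF p]])
  fix n
  have "\<bar>1 - R / norm (a n)\<bar> = \<bar>norm (1::complex) - norm (z / a n)\<bar>" using z by (simp add: norm_divide)
  also have "\<dots> \<le> norm (1 - z / a n)" by (rule norm_triangle_ineq3)
  finally show "0 \<le> \<bar>1 - R / norm (a n)\<bar> \<and> \<bar>1 - R / norm (a n)\<bar> \<le> norm (1 - z / a n)" by simp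
qed

lemma eventually_count_mult_ln_le_linear:
  fixes r :: "nat \<Rightarrow> real"
  assumes rpos: "\<And>n. r n > 0" and \<sigma>: "0 < \<sigma>" "\<sigma> < 1" and e: "e > 0"
    and count: "\<And>n. real (Suc n) * ln 2 \<le> D + (3 * r n) powr \<sigma>"
  shows "eventually (\<lambda>T. \<forall>K. (\<forall>n<K. r n < 4*T) \<longrightarrow> real K * ln (16*(real K+1)) \<le> e*T) at_top"
proof -
  define D' where "D' = max D 0"
  define k where "k = (\<lambda>T. D'/ln 2 + (12 powr \<sigma>/ln 2) * T powr \<sigma>)"
  have "eventually (\<lambda>T. k T * ln (16*(k T + 1)) \<le> e*T) at_top"
    unfolding k_def by (rule eventually_powr_mult_ln_le_linear) (use \<sigma> e in \<open>auto simp: D'_def\<close>)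
  moreover have "eventually (\<lambda>T::real. T > 0) at_top" by (rule eventually_gt_at_top)
  ultimately show ?thesis
  proof eventually_elim
    case (elim T)
    have k0: "k T \<ge> 0" by (simp add: k_def D'_def)
    show ?case
    proof (intro allI impI)
      fix K :: nat assume small: "\<forall>n<K. r n < 4*T"
      have "real K \<le> k T"
      proof (cases K)
        case (Suc m)
        have "real K * ln 2 \<le> D + (3 * r m) powr \<sigma>" using count[of m] Suc by simp
        also have "(3 * r m) powr \<sigma> \<le> (12 * T) powr \<sigma>"
          using small Suc rpos[of m] \<sigma> by (intro powr_mono2) auto
        also have "(12 * T) powr \<sigma> = 12 powr \<sigma> * T powr \<sigma>" using elim(2) by (simp add: powr_mult)
        finally have "real K \<le> (D' + 12 powr \<sigma> * T powr \<sigma>) / ln 2"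
          by (simp add: D'_def le_divide_eq)
        also have "\<dots> = k T" by (simp add: k_def add_divide_distrib)
        finally show ?thesis .
      qed (use k0 in simp)
      then have "real K * ln (16*(real K+1)) \<le> k T * ln (16*(k T + 1))"
        using k0 by (intro mult_mono) auto
      then show "real K * ln (16*(real K+1)) \<le> e*T" using elim(1) by linarith
    qed
  qed
qed

lemma eventually_exponent_le_linear:
  fixes r :: "nat \<Rightarrow> real"
  assumes rpos: "\<And>n. r n > 0" and \<sigma>: "0 < \<sigma>" "\<sigma> < 1" and e: "e > 0"
    and count: "\<And>n. real (Suc n) * ln 2 \<le> D + (3 * r n) powr \<sigma>"
  shows "eventually (\<lambda>T. \<forall>K R t. (\<forall>n<K. r n < 4*T) \<and> T \<le> R \<and> R \<le> 2*T \<and> 0 \<le> t \<and> t \<le> e/12 \<longrightarrow>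
      C + R powr \<sigma> + real K * ln (16*(real K+1)) + 2*R*t \<le> e*R) at_top"
proof -
  have "eventually (\<lambda>T. \<bar>C\<bar> + 2 powr \<sigma> * T powr \<sigma> \<le> (e/3) * T) at_top"
    by (rule eventually_powr_le_linear) (use \<sigma> e in auto)
  moreover have "eventually (\<lambda>T. \<forall>K. (\<forall>n<K. r n < 4*T) \<longrightarrow> real K * ln (16*(real K+1)) \<le> (e/3)*T) at_top"
    by (rule eventually_count_mult_ln_le_linear[OF rpos \<sigma> _ count]) (use e in simp)
  moreover have "eventually (\<lambda>T::real. T > 0) at_top" by (rule eventually_gt_at_top)
  ultimately show ?thesis
  proof eventually_elim
    case (elim T)
    show ?case
    proof (intro allI impI, elim conjE)
      fix K R t assume K: "\<forall>n<K. r n < 4*T" and R: "T \<le> R" "R \<le> 2*T" and t: "0 \<le> t" "t \<le> e/12"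
      have "R powr \<sigma> \<le> (2*T) powr \<sigma>" using R elim(3) \<sigma> by (intro powr_mono2) auto
      also have "\<dots> = 2 powr \<sigma> * T powr \<sigma>" using elim(3) by (simp add: powr_mult)
      finally have "R powr \<sigma> \<le> 2 powr \<sigma> * T powr \<sigma>" .
      moreover have "real K * ln (16*(real K+1)) \<le> (e/3)*T" using elim(2) K by blast
      moreover have "2*R*t \<le> (4*T) * (e/12)" by (rule mult_mono) (use R t elim(3) in auto)
      then have "2*R*t \<le> (e/3)*T" by (simp add: mult.commute)
      ultimately have "C + R powr \<sigma> + real K * ln (16*(real K+1)) + 2*R*t \<le> e*T"
        using elim(1) by linarith
      also have "\<dots> \<le> e*R" using R e by simp
      finally show "C + R powr \<sigma> + real K * ln (16*(real K+1)) + 2*R*t \<le> e*R" .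
    qed
  qed
qed

text \<open>For large \<open>T\<close> the few \<open>|a\<^sub>n|\<close> below \<open>4T\<close> leave room for a radius \<open>R \<in> [T, 2T]\<close> on which
  \<open>|P|\<close> is not too small, so that \<open>h = (h P)/P\<close> inherits a subexponential bound there.\<close>
lemma subexponential_if_mult_genus_zero_product:
  fixes h P :: "complex \<Rightarrow> complex" and a :: "nat \<Rightarrow> complex" and q :: "real \<Rightarrow> real"
  assumes a_nz: "\<And>n. a n \<noteq> 0" and mono: "mono (norm \<circ> a)"
    and lim: "filterlim (\<lambda>n. norm (a n)) at_top at_top" and summ: "summable (\<lambda>n. 1 / norm (a n))"
    and \<sigma>: "0 < \<sigma>" "\<sigma> < 1"
    and count: "\<And>n. real (Suc n) * ln 2 \<le> D + (3 * norm (a n)) powr \<sigma>"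
    and growth: "\<And>z. norm (h z * P z) \<le> exp (C + norm z powr \<sigma>)"
    and P: "\<And>z. (\<lambda>n. 1 - z / a n) has_prod P z"
    and q: "\<And>R. (\<lambda>n. \<bar>1 - R / norm (a n)\<bar>) has_prod q R"
  shows "subexponential_on_circles h"
  unfolding subexponential_on_circles_def
proof (intro allI impI)
  fix e R0 :: real assume e: "e > 0"
  define r where "r = (\<lambda>n. norm (a n))"
  have rpos: "r n > 0" for n using a_nz by (simp add: r_def)
  have summ': "summable (\<lambda>n. 1 / r n)" using summ by (simp add: r_def)
  obtain M where M: "\<And>n. n \<ge> M \<Longrightarrow> norm (\<Sum>i. 1 / r (i + n)) < e/12"
    using suminf_exist_split[of "e/12" "\<lambda>n. 1 / r n"] summ' e by auto
  have count': "real (Suc n) * ln 2 \<le> D + (3 * r n) powr \<sigma>" for n using count by (simp add: r_def)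
  have "eventually (\<lambda>T. (\<forall>K R t. (\<forall>n<K. r n < 4*T) \<and> T \<le> R \<and> R \<le> 2*T \<and> 0 \<le> t \<and> t \<le> e/12 \<longrightarrow>
      C + R powr \<sigma> + real K * ln (16*(real K+1)) + 2*R*t \<le> e*R) \<and> T \<ge> max (max R0 1) (r M)) at_top"
    using eventually_exponent_le_linear[OF rpos \<sigma> e count'] eventually_ge_at_top by (rule eventually_conj)
  from eventually_happens'[OF trivial_limit_at_top_linorder this]
  obtain T where T_exponent: "\<forall>K R t. (\<forall>n<K. r n < 4*T) \<and> T \<le> R \<and> R \<le> 2*T \<and> 0 \<le> t \<and> t \<le> e/12 \<longrightarrow>
      C + R powr \<sigma> + real K * ln (16*(real K+1)) + 2*R*t \<le> e*R"
    and T_max: "T \<ge> max (max R0 1) (r M)"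
    by blast
  have T: "T \<ge> R0" "T \<ge> 1" "T \<ge> r M" using T_max by auto
  have "mono r" using mono by (simp add: r_def mono_def)
  have lim_r: "filterlim r at_top at_top" using lim by (simp add: r_def)
  have q_r: "(\<lambda>n. \<bar>1 - R / r n\<bar>) has_prod q R" for R using q by (simp add: r_def)
  have T_pos: "T > 0" using T by simp
  obtain R K where R: "T \<le> R" "R \<le> 2*T" and K_small: "\<And>n. n < K \<Longrightarrow> r n < 4*T"
    and K_large: "\<And>n. K \<le> n \<Longrightarrow> 4*T \<le> r n" and q_pos: "q R > 0"
    and q_ge: "- (real K * ln (16 * (real K + 1))) - 2*R*(\<Sum>n. 1 / r (n+K)) \<le> ln (q R)"
    using exists_radius_product_lower_bound[OF rpos \<open>mono r\<close> lim_r summ' q_r T_pos] by blast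
  have "K \<ge> M"
  proof (rule ccontr)
    assume "\<not> K \<ge> M"
    then have "r K \<le> r M" using \<open>mono r\<close> by (simp add: mono_def)
    then show False using K_large[of K] T by simp
  qed
  define tail where "tail = (\<Sum>n. 1 / r (n + K))"
  have "0 \<le> tail" unfolding tail_def
    by (intro suminf_nonneg summable_ignore_initial_segment[OF summ']) (use rpos in \<open>simp add: less_imp_le\<close>)
  moreover have "tail \<le> e/12" using M[OF \<open>K \<ge> M\<close>] by (simp add: tail_def)
  ultimately have "C + R powr \<sigma> + real K * ln (16*(real K+1)) + 2*R*tail \<le> e*R"
    using T_exponent K_small R by blast
  then have exponent: "C + R powr \<sigma> - ln (q R) \<le> e * R"
    using q_ge unfolding tail_def by linarith
  have "norm (h z) \<le> exp (e * R)" if z: "norm z = R" for z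
  proof -
    have "norm (h z) * q R \<le> norm (h z) * norm (P z)"
      using norm_has_prod_ge_radial[OF z P q] by (simp add: mult_left_mono)
    also have "\<dots> \<le> exp (C + R powr \<sigma>)" using growth[of z] z by (simp add: norm_mult)
    finally have "norm (h z) \<le> exp (C + R powr \<sigma> - ln (q R))"
      using q_pos by (simp add: exp_diff le_divide_eq)
    also have "\<dots> \<le> exp (e * R)" using exponent by simp
    finally show ?thesis .
  qed
  then show "\<exists>R\<ge>R0. \<forall>z. norm z = R \<longrightarrow> norm (h z) \<le> exp (e * R)"
    using R T by (intro exI[of _ R]) auto
qed

section \<open>Hadamard products of functions of order less than one\<close>

lemma genus_zero_product_exists:
  fixes a :: "nat \<Rightarrow> complex"
  assumes a_nz: "\<And>n. a n \<noteq> 0" and lim: "filterlim a at_infinity at_top"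
    and summ: "summable (\<lambda>n. 1 / norm (a n))"
  obtains P where "P holomorphic_on UNIV" "\<And>z. P z = 0 \<longleftrightarrow> z \<in> range a"
    "\<And>z. zorder P z = card (a -` {z})" "\<And>z. (\<lambda>n. 1 - z / a n) has_prod P z"
proof -
  interpret P: weierstrass_product a "\<lambda>_. 0"
  proof
    fix s :: real
    show "summable (\<lambda>n. (s / norm (a n)) ^ Suc 0)" using summable_mult[OF summ, of s] by simp
  qed (use a_nz lim in auto)
  have "(\<lambda>n. 1 - z / a n) has_prod P.f z" for z
    using P.has_prod[of z] by (simp add: weierstrass_factor_def)
  then show ?thesis using that P.holomorphic P.zero P.zorder by blast
qed

lemma hadamard_product_infinite_zeros:
  fixes \<phi> :: "complex \<Rightarrow> complex"
  assumes hol: "\<phi> holomorphic_on UNIV" and nz: "\<phi> 0 \<noteq> 0" and \<sigma>: "0 < \<sigma>" "\<sigma> < 1"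
    and growth: "\<And>z. norm (\<phi> z) \<le> exp (C + norm z powr \<sigma>)"
    and inf: "infinite {z. \<phi> z = 0}"
  obtains c a where "c \<noteq> 0" "range a = {z. \<phi> z = 0}" "\<And>z. (\<lambda>n. 1 - z / a n) has_prod (\<phi> z / c)"
proof -
  obtain a :: "nat \<Rightarrow> complex" where mono: "mono (norm \<circ> a)" and zeros: "range a = {z. \<phi> z = 0}"
    and lim: "filterlim a at_infinity at_top"
    and mult: "\<And>z. \<phi> z = 0 \<Longrightarrow> finite (a -` {z}) \<and> int (card (a -` {z})) = zorder \<phi> z"
    using entire_zeros_sequence[OF hol nz inf] by blast
  have a_nz: "a n \<noteq> 0" for n
    using nz rangeI[of a n] unfolding zeros by auto
  have lim': "filterlim (\<lambda>n. norm (a n)) at_top at_top"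
    using lim by (simp add: filterlim_at_infinity_conv_norm_at_top)
  have count: "real (Suc n) * ln 2 \<le> (C - ln (norm (\<phi> 0))) + (3 * norm (a n)) powr \<sigma>" for n
    by (rule entire_zero_counting_bound[OF hol nz mono zeros lim mult growth])
  have summ: "summable (\<lambda>n. 1 / norm (a n))"
    by (rule summable_inverse_if_counting_bound[OF _ \<sigma> count]) (use a_nz in simp)
  obtain P where Phol: "P holomorphic_on UNIV" and P_range: "\<And>z. P z = 0 \<longleftrightarrow> z \<in> range a"
    and P_zorder: "\<And>z. zorder P z = card (a -` {z})" and P: "\<And>z. (\<lambda>n. 1 - z / a n) has_prod P z"
    using genus_zero_product_exists[OF a_nz lim summ] by blast
  have P_zero: "P z = 0 \<longleftrightarrow> \<phi> z = 0" for z using P_range[of z] by (simp add: zeros)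
  obtain q where Q: "\<And>R. (\<lambda>n. \<bar>1 - R / norm (a n)\<bar>) has_prod q R"
    using radial_product_exists[OF a_nz lim' summ] by blast
  have "zorder P z = zorder \<phi> z" if "\<phi> z = 0" for z
    using P_zorder[of z] mult[OF that] by simp
  then obtain h where hhol: "h holomorphic_on UNIV" and hnz: "\<And>z. h z \<noteq> 0"
    and hP: "\<And>z. \<phi> z = h z * P z"
    using entire_factor_same_zeros[OF hol Phol P_zero] by blast
  have "subexponential_on_circles h"
    by (rule subexponential_if_mult_genus_zero_product[where C = C, OF a_nz mono lim' summ \<sigma> count _ P Q])
      (simp add: hP[symmetric] growth)
  then have "h z = h 0" for z by (rule entire_nonvanishing_subexponential_const[OF hhol hnz])
  then have "\<phi> z = h 0 * P z" for z using hP by metis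
  then have "(\<lambda>n. 1 - z / a n) has_prod (\<phi> z / h 0)" for z
    using P[of z] hnz[of 0] by simp
  then show ?thesis using that[of "h 0" a] hnz zeros by blast
qed

lemma zorder_prod_power_linear_factors:
  fixes Z :: "complex set" and m :: "complex \<Rightarrow> nat"
  assumes fin: "finite Z" and nz: "0 \<notin> Z" and w: "w \<in> Z"
  shows "zorder (\<lambda>z. \<Prod>v\<in>Z. (1 - z / v) ^ m v) w = int (m w)"
proof (rule zorder_eqI[where S = UNIV and g = "\<lambda>z. (-1/w) ^ m w * (\<Prod>v\<in>Z-{w}. (1 - z / v) ^ m v)"])
  show "(\<lambda>z. (-1/w) ^ m w * (\<Prod>v\<in>Z-{w}. (1 - z / v) ^ m v)) holomorphic_on UNIV"
    by (intro holomorphic_intros) (use nz in auto)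
  have "(1 - w / v) ^ m v \<noteq> 0" if "v \<in> Z-{w}" for v
    using that nz by (auto simp: field_simps)
  then show "(-1/w) ^ m w * (\<Prod>v\<in>Z-{w}. (1 - w / v) ^ m v) \<noteq> 0"
    using fin w nz by auto
  fix x
  have "(\<Prod>v\<in>Z. (1 - x / v) ^ m v) = (1 - x / w) ^ m w * (\<Prod>v\<in>Z-{w}. (1 - x / v) ^ m v)"
    using fin w by (rule prod.remove)
  also have "(1 - x / w) ^ m w = (-1/w) ^ m w * (x - w) ^ m w"
  proof -
    have "w \<noteq> 0" using w nz by blast
    then have "1 - x / w = (-1/w) * (x - w)" by (simp add: field_simps)
    then show ?thesis by (simp only: power_mult_distrib)
  qed
  finally show "(\<Prod>v\<in>Z. (1 - x / v) ^ m v)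
      = (-1/w) ^ m w * (\<Prod>v\<in>Z-{w}. (1 - x / v) ^ m v) * (x - w) powi int (m w)"
    by (simp only: power_int_of_nat mult_ac)
qed auto

lemma norm_prod_power_linear_factors_ge_1:
  fixes Z :: "complex set" and m :: "complex \<Rightarrow> nat"
  assumes fin: "finite Z" and nz: "0 \<notin> Z" and z: "2 * (\<Sum>w\<in>Z. norm w) \<le> norm z"
  shows "1 \<le> norm (\<Prod>w\<in>Z. (1 - z / w) ^ m w)"
proof -
  have "1 \<le> norm (1 - z / v)" if v: "v \<in> Z" for v
  proof -
    have "2 * norm v \<le> norm z"
      using member_le_sum[of v Z norm] fin v z by simp
    then have "2 \<le> norm (z / v)" using nz v by (auto simp: norm_divide le_divide_eq mult.commute)
    also have "\<dots> = norm (1 - (1 - z / v))" by simp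
    also have "\<dots> \<le> 1 + norm (1 - z / v)" using norm_triangle_ineq4[of 1 "1 - z / v"] by simp
    finally show ?thesis by simp
  qed
  then show ?thesis
    unfolding prod_norm[symmetric] norm_power by (intro prod_ge_1 one_le_power) auto
qed

lemma subexponential_if_mult_bounded_below:
  fixes h P :: "complex \<Rightarrow> complex"
  assumes \<sigma>: "\<sigma> < 1" and growth: "\<And>z. norm (h z * P z) \<le> exp (C + norm z powr \<sigma>)"
    and P_ge: "\<And>z. B \<le> norm z \<Longrightarrow> 1 \<le> norm (P z)"
  shows "subexponential_on_circles h"
  unfolding subexponential_on_circles_def
proof (intro allI impI)
  fix e R0 :: real assume e: "e > 0"
  have "eventually (\<lambda>T. C + 1 * T powr \<sigma> \<le> e * T \<and> T \<ge> max R0 B) at_top"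
    using eventually_powr_le_linear[OF \<sigma> e] eventually_ge_at_top by (rule eventually_conj)
  from eventually_happens'[OF trivial_limit_at_top_linorder this]
  obtain R where R: "C + R powr \<sigma> \<le> e * R" "R \<ge> max R0 B" by auto
  have "norm (h z) \<le> exp (e * R)" if z: "norm z = R" for z
  proof -
    have "norm (h z) \<le> norm (h z * P z)"
      using P_ge[of z] z R by (simp add: norm_mult mult_le_cancel_left1)
    also have "\<dots> \<le> exp (C + R powr \<sigma>)" using growth[of z] z by simp
    also have "\<dots> \<le> exp (e * R)" using R by simp
    finally show ?thesis .
  qed
  then show "\<exists>R\<ge>R0. \<forall>z. norm z = R \<longrightarrow> norm (h z) \<le> exp (e * R)"
    using R by (intro exI[of _ R]) auto
qed

lemma hadamard_product_finite_zeros: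
  fixes \<phi> :: "complex \<Rightarrow> complex"
  assumes hol: "\<phi> holomorphic_on UNIV" and nz: "\<phi> 0 \<noteq> 0" and \<sigma>: "\<sigma> < 1"
    and growth: "\<And>z. norm (\<phi> z) \<le> exp (C + norm z powr \<sigma>)"
    and fin: "finite {z. \<phi> z = 0}"
  obtains c where "c \<noteq> 0" "\<And>z. \<phi> z = c * (\<Prod>w\<in>{z. \<phi> z = 0}. (1 - z / w) ^ nat (zorder \<phi> w))"
proof -
  define Z where "Z = {z. \<phi> z = 0}"
  define P where "P = (\<lambda>z. \<Prod>w\<in>Z. (1 - z / w) ^ nat (zorder \<phi> w))"
  have Z: "finite Z" "0 \<notin> Z" using fin nz by (auto simp: Z_def)
  have pos: "zorder \<phi> w > 0" if "w \<in> Z" for w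
    using zorder_entire_pos[OF hol nz] that by (simp add: Z_def)
  have Phol: "P holomorphic_on UNIV" unfolding P_def by (intro holomorphic_intros) (use Z in auto)
  have "(1 - z / w) ^ nat (zorder \<phi> w) = 0 \<longleftrightarrow> z = w" if "w \<in> Z" for z w
    using that Z(2) pos[OF that] by auto
  then have P_zero: "P z = 0 \<longleftrightarrow> \<phi> z = 0" for z
    unfolding P_def using Z(1) by (auto simp: Z_def)
  have P_zorder: "zorder P w = zorder \<phi> w" if "\<phi> w = 0" for w
  proof -
    have "w \<in> Z" using that by (simp add: Z_def)
    then show ?thesis
      using zorder_prod_power_linear_factors[OF Z] pos unfolding P_def by (simp add: less_imp_le)
  qed
  obtain h where hhol: "h holomorphic_on UNIV" and hnz: "\<And>z. h z \<noteq> 0"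
    and hP: "\<And>z. \<phi> z = h z * P z"
    using entire_factor_same_zeros[OF hol Phol P_zero P_zorder] by blast
  have "subexponential_on_circles h"
  proof (rule subexponential_if_mult_bounded_below[OF \<sigma>])
    show "norm (h z * P z) \<le> exp (C + norm z powr \<sigma>)" for z using growth[of z] hP[of z] by simp
    show "1 \<le> norm (P z)" if "2 * (\<Sum>w\<in>Z. norm w) \<le> norm z" for z
      unfolding P_def by (rule norm_prod_power_linear_factors_ge_1[OF Z that])
  qed
  then have "h z = h 0" for z by (rule entire_nonvanishing_subexponential_const[OF hhol hnz])
  then have "\<phi> z = h 0 * P z" for z using hP by metis
  then show ?thesis using that[of "h 0"] hnz[of 0] unfolding P_def Z_def by blast
qed

section \<open>Comparison of \<open>\<phi>(u)\<close> and \<open>\<phi>(-u)\<close>\<close>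

lemma norm_one_plus_div_less_norm_one_minus_div:
  assumes w: "w \<in> \<real>" "Re w < 0" and u: "Re u > 0"
  shows "norm (1 + u / w) < norm (1 - u / w)"
proof -
  obtain s where ws: "w = of_real s" using w(1) Reals_cases by blast
  have s: "s < 0" using w(2) ws by simp
  define q where "q = Re u / s"
  have q: "q < 0" using s u by (simp add: q_def divide_pos_neg)
  have parts: "Re (1 + u/w) = 1 + q" "Im (1 + u/w) = Im u / s"
    "Re (1 - u/w) = 1 - q" "Im (1 - u/w) = - (Im u / s)"
    by (simp_all add: ws q_def Re_divide_of_real Im_divide_of_real)
  have "(1+q)*(1+q) < (1-q)*(1-q)" using q by (simp add: algebra_simps)
  then have "norm (1 + u / w)^2 < norm (1 - u / w)^2"
    unfolding cmod_power2 parts by (simp add: power2_eq_square)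
  then show ?thesis by (meson norm_ge_zero power_less_imp_less_base)
qed

lemma norm_has_prod_reflect_less:
  fixes a :: "nat \<Rightarrow> complex"
  assumes neg: "\<And>n. a n \<in> \<real> \<and> Re (a n) < 0" and u: "Re u > 0"
    and p: "(\<lambda>n. 1 - u / a n) has_prod p" and p': "(\<lambda>n. 1 - (-u) / a n) has_prod p'"
  shows "norm p' < norm p"
proof -
  have less: "norm (1 + u / a n) < norm (1 - u / a n)" for n
    using norm_one_plus_div_less_norm_one_minus_div neg u by blast
  then have "1 - u / a n \<noteq> 0" for n by (metis norm_ge_zero norm_zero not_less)
  then have "p \<noteq> 0" using has_prod_eq_0_iff[OF p] by (metis rangeE)
  show ?thesis
  proof (cases "p' = 0")
    case False
    then have nz: "1 + u / a n \<noteq> 0" for n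
      using has_prod_eq_0_iff[OF p'] by (metis diff_minus_eq_add minus_divide_left rangeI)
    show ?thesis
    proof (rule has_prod_less[where f = "\<lambda>n. norm (1 + u / a n)" and g = "\<lambda>n. norm (1 - u / a n)",
          OF less[of 0]])
      show "(\<lambda>n. norm (1 + u / a n)) has_prod norm p'" using has_prod_norm[OF p'] by simp
      show "(\<lambda>n. norm (1 - u / a n)) has_prod norm p" using has_prod_norm[OF p] .
    qed (use less nz in \<open>auto intro: less_imp_le\<close>)
  qed (use \<open>p \<noteq> 0\<close> in simp)
qed

lemma norm_prod_reflect_less:
  fixes Z :: "complex set" and m :: "complex \<Rightarrow> nat"
  assumes fin: "finite Z" and neg: "\<And>w. w \<in> Z \<Longrightarrow> w \<in> \<real> \<and> Re w < 0"
    and v: "v \<in> Z" "m v > 0" and u: "Re u > 0"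
  shows "norm (\<Prod>w\<in>Z. (1 - (-u) / w) ^ m w) < norm (\<Prod>w\<in>Z. (1 - u / w) ^ m w)"
proof -
  have less: "norm (1 + u / w) < norm (1 - u / w)" if "w \<in> Z" for w
    using norm_one_plus_div_less_norm_one_minus_div neg[OF that] u by blast
  have "(\<Prod>w\<in>Z. norm (1 + u / w) ^ m w) < (\<Prod>w\<in>Z. norm (1 - u / w) ^ m w)"
  proof (rule prod_mono_strict[OF v(1) _ fin])
    show "norm (1 + u / v) ^ m v < norm (1 - u / v) ^ m v"
      using less[OF v(1)] v(2) by (intro power_strict_mono) auto
    show "0 \<le> norm (1 + u / w) ^ m w \<and> norm (1 + u / w) ^ m w \<le> norm (1 - u / w) ^ m w"
      if "w \<in> Z" for w using less[OF that] by (auto intro: power_mono)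
    show "0 < norm (1 - u / w) ^ m w" if "w \<in> Z" for w
      using less[OF that] by (metis norm_ge_zero order_le_less_trans zero_less_power)
  qed
  then show ?thesis by (simp add: prod_norm[symmetric] norm_power)
qed

lemma norm_reflect_less_if_negative_zeros:
  fixes \<phi> :: "complex \<Rightarrow> complex"
  assumes hol: "\<phi> holomorphic_on UNIV" and nz: "\<phi> 0 \<noteq> 0" and \<sigma>: "0 < \<sigma>" "\<sigma> < 1"
    and growth: "\<And>z. norm (\<phi> z) \<le> exp (C + norm z powr \<sigma>)"
    and neg: "\<And>z. \<phi> z = 0 \<Longrightarrow> z \<in> \<real> \<and> Re z < 0"
    and zero: "\<phi> w0 = 0" and u: "Re u > 0"
  shows "norm (\<phi> (-u)) < norm (\<phi> u)"
proof (cases "finite {z. \<phi> z = 0}")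
  case False
  obtain c a where c: "c \<noteq> 0" and zeros: "range a = {z. \<phi> z = 0}"
    and prod: "\<And>z. (\<lambda>n. 1 - z / a n) has_prod (\<phi> z / c)"
    using hadamard_product_infinite_zeros[OF hol nz \<sigma> growth False] by blast
  have "a n \<in> \<real> \<and> Re (a n) < 0" for n
    using neg rangeI[of a n] unfolding zeros by auto
  then have "norm (\<phi> (-u) / c) < norm (\<phi> u / c)"
    by (rule norm_has_prod_reflect_less[OF _ u prod prod])
  then show ?thesis using c by (simp add: norm_divide divide_less_cancel)
next
  case True
  obtain c where c: "c \<noteq> 0"
    and prod: "\<And>z. \<phi> z = c * (\<Prod>w\<in>{z. \<phi> z = 0}. (1 - z / w) ^ nat (zorder \<phi> w))"
    using hadamard_product_finite_zeros[OF hol nz \<sigma>(2) growth True] by blast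
  have "nat (zorder \<phi> w0) > 0" using zorder_entire_pos[OF hol nz zero] by simp
  then have "norm (\<Prod>w\<in>{z. \<phi> z = 0}. (1 - (-u) / w) ^ nat (zorder \<phi> w))
      < norm (\<Prod>w\<in>{z. \<phi> z = 0}. (1 - u / w) ^ nat (zorder \<phi> w))"
    by (intro norm_prod_reflect_less[where v = w0, OF True _ _ _ u]) (use neg zero in auto)
  then show ?thesis using c by (simp add: prod[of u] prod[of "-u"] norm_mult)
qed

lemma norm_reflect_ne_if_same_sign_zeros:
  fixes \<phi> :: "complex \<Rightarrow> complex"
  assumes hol: "\<phi> holomorphic_on UNIV" and \<sigma>: "0 < \<sigma>" "\<sigma> < 1"
    and growth: "\<And>z. norm (\<phi> z) \<le> exp (C + norm z powr \<sigma>)"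
    and real_zeros: "\<And>z. \<phi> z = 0 \<Longrightarrow> z \<in> \<real>"
    and same_sign: "(\<forall>z. \<phi> z = 0 \<longrightarrow> Re z > 0) \<or> (\<forall>z. \<phi> z = 0 \<longrightarrow> Re z < 0)"
    and zero: "\<phi> w0 = 0" and z: "Re z \<noteq> 0"
  shows "norm (\<phi> z) \<noteq> norm (\<phi> (-z))"
proof -
  have nz: "\<phi> 0 \<noteq> 0" using same_sign by force
  have ne: "norm (\<psi> z) \<noteq> norm (\<psi> (-z))"
    if \<psi>: "\<psi> holomorphic_on UNIV" "\<psi> 0 \<noteq> 0" "\<And>z. norm (\<psi> z) \<le> exp (C + norm z powr \<sigma>)"
      "\<And>z. \<psi> z = 0 \<Longrightarrow> z \<in> \<real> \<and> Re z < 0" "\<psi> w = 0" for \<psi> w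
  proof (cases "Re z > 0")
    case True
    then show ?thesis using norm_reflect_less_if_negative_zeros[OF \<psi>(1,2) \<sigma> \<psi>(3,4,5), of z] by simp
  next
    case False
    then have "Re (-z) > 0" using z by simp
    then show ?thesis using norm_reflect_less_if_negative_zeros[OF \<psi>(1,2) \<sigma> \<psi>(3,4,5), of "-z"] by simp
  qed
  from same_sign show ?thesis
  proof
    assume pos: "\<forall>z. \<phi> z = 0 \<longrightarrow> Re z > 0"
    have "uminus holomorphic_on (UNIV :: complex set)"
      using holomorphic_on_minus[OF holomorphic_on_id[of UNIV]] by (simp add: id_def)
    then have hol': "(\<lambda>z. \<phi> (-z)) holomorphic_on UNIV"
      using holomorphic_on_compose_gen[of uminus UNIV \<phi> UNIV] hol by (auto simp: o_def)
    have zeros': "z \<in> \<real> \<and> Re z < 0" if "\<phi> (-z) = 0" for z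
    proof -
      have "-z \<in> \<real>" "Re (-z) > 0" using that pos real_zeros[of "-z"] by auto
      then show ?thesis using Reals_minus[of "-z"] by simp
    qed
    have growth': "norm (\<phi> (-z)) \<le> exp (C + norm z powr \<sigma>)" for z
      using growth[of "-z"] by simp
    have "norm (\<phi> (-z)) \<noteq> norm (\<phi> (- (-z)))"
      using ne[of "\<lambda>z. \<phi> (-z)" "-w0", OF hol' _ growth' zeros'] nz zero by simp
    then show ?thesis by simp
  next
    assume "\<forall>z. \<phi> z = 0 \<longrightarrow> Re z < 0"
    then show ?thesis using ne[of \<phi> w0] hol nz growth real_zeros zero by blast
  qed
qed

theorem lemma2:
  fixes \<phi> :: "complex \<Rightarrow> complex" and a :: "nat \<Rightarrow> complex"
  assumes entire: "\<phi> holomorphic_on UNIV"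
    and series: "\<And>z. (\<lambda>n. a n * z ^ n) sums \<phi> z"
    and real_zeros: "\<And>z. \<phi> z = 0 \<Longrightarrow> z \<in> \<real>"
    and same_sign: "(\<forall>z. \<phi> z = 0 \<longrightarrow> Re z > 0) \<or> (\<forall>z. \<phi> z = 0 \<longrightarrow> Re z < 0)"
    and order: "0 \<le> entire_order \<phi>" "entire_order \<phi> < 1"
  shows "((\<forall>z. odd_part a z = 0 \<longrightarrow> Re z = 0) \<or> (\<forall>z. odd_part a z = 0))
       \<and> ((\<forall>z. even_part a z = 0 \<longrightarrow> Re z = 0) \<or> (\<forall>z. even_part a z = 0))"
proof -
  obtain \<sigma> C where \<sigma>: "0 < \<sigma>" "\<sigma> < 1" and growth: "\<And>z. norm (\<phi> z) \<le> exp (C + norm z powr \<sigma>)"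
    using entire_order_less_1_imp_growth[OF entire order(2)] by blast
  show ?thesis
  proof (cases "\<exists>w. \<phi> w = 0")
    case True
    then have "\<And>z. Re z \<noteq> 0 \<Longrightarrow> norm (\<phi> z) \<noteq> norm (\<phi> (-z))"
      using norm_reflect_ne_if_same_sign_zeros[OF entire \<sigma> growth real_zeros same_sign] by blast
    then show ?thesis
      using Re_eq_0_if_odd_part_eq_0[OF series] Re_eq_0_if_even_part_eq_0[OF series] by blast
  next
    case False
    then have no_zeros: "{z. \<phi> z = 0} = {}" and "\<phi> 0 \<noteq> 0" by auto
    then obtain c where c: "c \<noteq> 0"
      and prod: "\<And>z. \<phi> z = c * (\<Prod>w\<in>{z. \<phi> z = 0}. (1 - z / w) ^ nat (zorder \<phi> w))"
      using hadamard_product_finite_zeros[OF entire _ \<sigma>(2) growth] by (metis finite.emptyI)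
    have "\<phi> z = c" for z using prod[of z] no_zeros by simp
    then show ?thesis using c odd_part_eq[OF series] even_part_eq[OF series] by simp
  qed
qed

end
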